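(* Let $n$ be a positive integer and let $\alpha,x,y$ be complex numbers. Then $$\frac{\alpha+n+1}2\sum_{k=0}^{n-1}\binom{\alpha+k}kE_k(x)E_{n-1-k}(y)=\sum_{k=0}^n\binom{\alpha+n+1}k\left((-1)^{n-k}B_k(x)-\binom{\alpha+n-k}{n-k}B_k(y)\right)E_{n-k}(x-y)$$ and $$(\alpha+n+2)\sum_{k=0}^n\binom{\alpha+k}kB_k(x)B_{n-k}(y)=(\alpha+1)\sum_{k=0}^n\binom{\alpha+n+2}k(-1)^{n-k}B_k(x)B_{n-k}(x-y)+\sum_{k=0}^n\binom{\alpha+n+2}k\binom{\alpha+n-k}{n-k}B_k(y)B_{n-k}(x-y).$$
   Context: Bernoulli numbers are defined by $B_0=1$ and $\sum_{k=0}^n\binom{n+1}kB_k=0$ for $n\ge1$; Euler numbers by $E_0=1$ and $\sum_{0\le k\le n,\,2\mid n-k}\binom nkE_k=0$ for $n\ge1$. The Bernoulli polynomials are $B_n(x)=\sum_{k=0}^n\binom nkB_kx^{n-k}$ and the Euler polynomials are $E_n(x)=\sum_{k=0}^n\binom nk\frac{E_k}{2^k}(x-\frac12)^{n-k}$. For complex $z$ and integer $k\ge0$, $\binom zk=z(z-1)\cdots(z-k+1)/k!$ (with $\binom z0=1$). *)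

theory Defs
  imports Complex_Main
begin

fun bern :: "nat \<Rightarrow> complex" where
  "bern n = (if n = 0 then 1
     else - (\<Sum>k<n. of_nat ((n + 1) choose k) * bern k) / of_nat (n + 1))"

fun euler_num :: "nat \<Rightarrow> complex" where
  "euler_num n = (if n = 0 then 1
     else - (\<Sum>k<n. if even (n - k) then of_nat (n choose k) * euler_num k else 0))"

definition bern_poly :: "nat \<Rightarrow> complex \<Rightarrow> complex" where
  "bern_poly n x = (\<Sum>k\<le>n. of_nat (n choose k) * bern k * x ^ (n - k))"

definition euler_poly :: "nat \<Rightarrow> complex \<Rightarrow> complex" where
  "euler_poly n x = (\<Sum>k\<le>n. of_nat (n choose k) * (euler_num k / 2 ^ k) * (x - 1/2) ^ (n - k))"

end

theory Submission
  imports Defs "HOL-Analysis.Analysis"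
begin

(* Write D n alpha x y for the left side minus the right side of either identity (for the Euler
   identity at n + 1). Since B_k and E_k are Appell sequences, d/dx P_k = k P_(k-1), so
   differentiating the binomial convolutions and absorbing the factors k into the generalised
   binomial coefficients gives
     d/dx D (n+1) alpha x y = (alpha + 1) D n (alpha + 1) x y,
     d/dt D (n+1) alpha t t = (alpha + n + 3) D n alpha t t,
   while B_k(1) = B_k(0) + [k = 1], E_k(1) = - E_k(0) for k > 0 and the reflection formulas give
   D m alpha 1 1 = D m alpha 0 0 for m >= 2. Inductively, once D n = 0, D (n+1) does not depend on x
   and is constant on the diagonal, so t |-> D (n+2) alpha t t has constant slope
   (alpha + n + 4) D (n+1) alpha 0 0 and the same value at 0 and 1. Hence D (n+1) alpha vanishes
   except possibly at alpha = - (n + 4), and by continuity in alpha everywhere. *)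

declare bern.simps [simp del] euler_num.simps [simp del]

lemma bern_0 [simp]: "bern 0 = 1"
  by (simp add: bern.simps)

lemma bern_Suc_0 [simp]: "bern (Suc 0) = - 1 / 2"
  by (simp add: bern.simps)

lemma euler_num_0 [simp]: "euler_num 0 = 1"
  by (simp add: euler_num.simps)

lemma euler_num_Suc_0 [simp]: "euler_num (Suc 0) = 0"
  by (simp add: euler_num.simps)

lemma bern_recurrence:
  assumes "n > 0"
  shows "(\<Sum>k\<le>n. of_nat (Suc n choose k) * bern k) = 0"
proof -
  have "bern n = - (\<Sum>k<n. of_nat (Suc n choose k) * bern k) / of_nat (Suc n)"
    using assms bern.simps[of n] by simp
  then show ?thesis
    by (simp add: lessThan_Suc_atMost[symmetric] field_simps del: of_nat_Suc)
qed

lemma euler_num_recurrence: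
  assumes "n > 0"
  shows "(\<Sum>k\<le>n. if even (n - k) then of_nat (n choose k) * euler_num k else 0) = 0"
  using assms euler_num.simps[of n] by (simp add: lessThan_Suc_atMost[symmetric])

lemma euler_num_odd: "odd n \<Longrightarrow> euler_num n = 0"
proof (induction n rule: less_induct)
  case (less n)
  have "(\<Sum>k<n. if even (n - k) then of_nat (n choose k) * euler_num k else 0) = 0"
    using less by (intro sum.neutral) auto
  with less.prems show ?case
    by (subst euler_num.simps) (simp add: odd_pos)
qed

lemma bern_poly_0 [simp]: "bern_poly 0 x = 1"
  by (simp add: bern_poly_def)

lemma euler_poly_0 [simp]: "euler_poly 0 x = 1"
  by (simp add: euler_poly_def)

lemma bern_poly_Suc_0: "bern_poly (Suc 0) x = x - 1 / 2"
  by (simp add: bern_poly_def)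

lemma euler_poly_Suc_0: "euler_poly (Suc 0) x = x - 1 / 2"
  by (simp add: euler_poly_def)

lemma bern_poly_at_0: "bern_poly n 0 = bern n"
  by (simp add: bern_poly_def power_0_left if_distrib cong: if_cong)

lemma bern_poly_at_1: "bern_poly n 1 = bern_poly n 0 + (if n = 1 then 1 else 0)"
proof -
  consider "n = 0" | "n = 1" | m where "n = Suc m" "m > 0"
    by (cases n) auto
  then show ?thesis
  proof cases
    case 3
    have "bern_poly n 1 = (\<Sum>k\<le>Suc m. of_nat (Suc m choose k) * bern k)"
      using 3 by (simp add: bern_poly_def)
    with 3 bern_recurrence[of m] show ?thesis
      by (simp add: bern_poly_at_0)
  qed (simp_all add: bern_poly_def)
qed

lemma euler_poly_reflect: "euler_poly n (1 - x) = (-1) ^ n * euler_poly n x"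
  unfolding euler_poly_def sum_distrib_left
proof (rule sum.cong)
  fix k assume k: "k \<in> {..n}"
  have sign: "(-1) ^ (n - k) * euler_num k = (-1) ^ n * euler_num k"
  proof (cases "even k")
    case True
    have "(-1 :: complex) ^ n = (-1) ^ (n - k) * (-1) ^ k"
      using k by (simp flip: power_add)
    with True show ?thesis by simp
  qed (simp add: euler_num_odd)
  then have sign': "(-1) ^ (n - k) * (euler_num k / 2 ^ k) = (-1) ^ n * (euler_num k / 2 ^ k)"
    by (metis times_divide_eq_right)
  have pow: "(1 - x - 1 / 2) ^ (n - k) = (-1) ^ (n - k) * (x - 1 / 2) ^ (n - k)"
    by (simp flip: power_mult_distrib)
  show "of_nat (n choose k) * (euler_num k / 2 ^ k) * (1 - x - 1 / 2) ^ (n - k)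
      = (-1) ^ n * (of_nat (n choose k) * (euler_num k / 2 ^ k) * (x - 1 / 2) ^ (n - k))"
    unfolding pow by (metis sign' mult.assoc mult.left_commute)
qed simp

lemma euler_poly_at_0_even:
  assumes "even n" "n > 0"
  shows "euler_poly n 0 = 0"
proof -
  have "euler_poly n 0
      = (\<Sum>k\<le>n. if even (n - k) then of_nat (n choose k) * euler_num k else 0) / 2 ^ n"
    unfolding euler_poly_def sum_divide_distrib
  proof (rule sum.cong)
    fix k assume k: "k \<in> {..n}"
    show "of_nat (n choose k) * (euler_num k / 2 ^ k) * (0 - 1 / 2) ^ (n - k)
        = (if even (n - k) then of_nat (n choose k) * euler_num k else 0) / 2 ^ n"
    proof (cases "even (n - k)")
      case True
      have "(2 :: complex) ^ n = 2 ^ k * 2 ^ (n - k)"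
        using k by (simp flip: power_add)
      with True show ?thesis
        by (simp add: power_divide)
    next
      case False
      with assms(1) k have "odd k" by auto
      with False show ?thesis by (simp add: euler_num_odd)
    qed
  qed simp
  with euler_num_recurrence[OF assms(2)] show ?thesis by simp
qed

lemma euler_poly_at_1: "n > 0 \<Longrightarrow> euler_poly n 1 = - euler_poly n 0"
  using euler_poly_reflect[of n 0] euler_poly_at_0_even[of n] by (cases "even n") simp_all

lemma binomial_sum_has_field_derivative:
  fixes a :: "nat \<Rightarrow> complex"
  shows "((\<lambda>x. \<Sum>k\<le>n. of_nat (n choose k) * a k * (x - z) ^ (n - k)) has_field_derivative
          of_nat n * (\<Sum>k\<le>n - 1. of_nat ((n - 1) choose k) * a k * (x - z) ^ (n - 1 - k))) (at x)"
proof -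
  have deriv: "((\<lambda>x. \<Sum>k\<le>n. of_nat (n choose k) * a k * (x - z) ^ (n - k)) has_field_derivative
      (\<Sum>k\<le>n. of_nat (n choose k) * a k * (of_nat (n - k) * (x - z) ^ (n - k - 1)))) (at x)"
    by (auto intro!: derivative_eq_intros sum.cong)
  show ?thesis
  proof (cases n)
    case 0
    with deriv show ?thesis by simp
  next
    case (Suc m)
    have summand: "of_nat (n choose k) * a k * (of_nat (n - k) * (x - z) ^ (n - k - 1))
        = of_nat n * (of_nat (m choose k) * a k * (x - z) ^ (m - k))" if "k \<le> m" for k
    proof -
      have "(of_nat (n - k) * of_nat (n choose k) :: complex) = of_nat n * of_nat (m choose k)"
        using binomial_absorb_comp[of n k] Suc by (metis diff_Suc_1 of_nat_mult)
      moreover have "n - k - 1 = m - k"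
        using Suc by simp
      ultimately show ?thesis
        by (metis (no_types, lifting) mult.assoc mult.left_commute)
    qed
    have "(\<Sum>k\<le>n. of_nat (n choose k) * a k * (of_nat (n - k) * (x - z) ^ (n - k - 1)))
        = (\<Sum>k\<le>m. of_nat (n choose k) * a k * (of_nat (n - k) * (x - z) ^ (n - k - 1)))"
      using Suc by simp
    also have "\<dots> = (\<Sum>k\<le>m. of_nat n * (of_nat (m choose k) * a k * (x - z) ^ (m - k)))"
      by (rule sum.cong[OF refl], rule summand) simp
    also have "\<dots> = of_nat n * (\<Sum>k\<le>n - 1. of_nat ((n - 1) choose k) * a k * (x - z) ^ (n - 1 - k))"
      using Suc by (simp add: sum_distrib_left)
    finally show ?thesis
      using deriv by simp
  qed
qed

lemma bern_poly_has_field_derivative: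
  "(bern_poly n has_field_derivative of_nat n * bern_poly (n - 1) x) (at x)"
  using binomial_sum_has_field_derivative[of n bern 0 x]
  by (simp add: bern_poly_def[abs_def])

lemma euler_poly_has_field_derivative:
  "(euler_poly n has_field_derivative of_nat n * euler_poly (n - 1) x) (at x)"
  using binomial_sum_has_field_derivative[of n "\<lambda>k. euler_num k / 2 ^ k" "1 / 2" x]
  by (simp add: euler_poly_def[abs_def])

lemma bern_poly_shift_has_field_derivative:
  "((\<lambda>x. bern_poly n (x - y)) has_field_derivative of_nat n * bern_poly (n - 1) (x - y)) (at x)"
proof -
  have "((\<lambda>x. x - y) has_field_derivative 1) (at x)"
    by (auto intro!: derivative_eq_intros)
  from DERIV_chain2[OF bern_poly_has_field_derivative this] show ?thesis
    by simp
qed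

lemma euler_poly_shift_has_field_derivative:
  "((\<lambda>x. euler_poly n (x - y)) has_field_derivative of_nat n * euler_poly (n - 1) (x - y)) (at x)"
proof -
  have "((\<lambda>x. x - y) has_field_derivative 1) (at x)"
    by (auto intro!: derivative_eq_intros)
  from DERIV_chain2[OF euler_poly_has_field_derivative this] show ?thesis
    by simp
qed

lemma has_field_derivative_zero_imp_eq:
  fixes f :: "complex \<Rightarrow> complex"
  assumes "\<And>t. (f has_field_derivative 0) (at t)"
  shows "f x = f y"
  using has_field_derivative_zero_constant[of UNIV f] assms by auto

lemma has_field_derivative_const_imp_increment:
  fixes f :: "complex \<Rightarrow> complex"
  assumes "\<And>t. (f has_field_derivative c) (at t)"
  shows "f 1 - f 0 = c"
proof -
  have "f 1 - c * 1 = f 0 - c * 0"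
    by (rule has_field_derivative_zero_imp_eq[of "\<lambda>t. f t - c * t"])
       (auto intro!: derivative_eq_intros assms)
  then show ?thesis by (simp add: algebra_simps)
qed

lemma continuous_vanishing_off_finite:
  fixes f :: "complex \<Rightarrow> complex"
  assumes "continuous_on UNIV f" "finite S" "\<And>z. z \<notin> S \<Longrightarrow> f z = 0"
  shows "f z = 0"
proof (rule continuous_constant_on_closure[of "- S" f 0 z])
  show "z \<in> closure (- S)"
    using assms(2) by (simp add: closure_complement empty_interior_finite)
qed (use assms in \<open>auto intro: continuous_on_subset\<close>)

lemma derivative_chain_vanishes:
  fixes f :: "nat \<Rightarrow> complex \<Rightarrow> complex"
  assumes start: "\<And>t. f 0 t = 0"
    and deriv: "\<And>n t. (f (Suc n) has_field_derivative c n * f n t) (at t)"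
    and ends: "\<And>n. f (Suc (Suc n)) 1 = f (Suc (Suc n)) 0"
    and nonzero: "\<And>k. 0 < k \<Longrightarrow> k \<le> n \<Longrightarrow> c k \<noteq> 0"
  shows "f n t = 0"
  using nonzero
proof (induction n arbitrary: t)
  case 0
  show ?case by (rule start)
next
  case (Suc n)
  then have IH: "f n t = 0" for t by simp
  have const: "f (Suc n) t = f (Suc n) 0" for t
    by (rule has_field_derivative_zero_imp_eq) (use deriv[of n] IH in simp)
  have "f (Suc (Suc n)) 1 - f (Suc (Suc n)) 0 = c (Suc n) * f (Suc n) 0"
    by (rule has_field_derivative_const_imp_increment) (use deriv[of "Suc n"] const in metis)
  with ends Suc.prems have "f (Suc n) 0 = 0" by simp
  with const show ?case by simp
qed

lemma bern_poly_reflect: "bern_poly n (1 - x) = (-1) ^ n * bern_poly n x"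
proof -
  define f where "f n x = (-1) ^ n * bern_poly n (1 - x) - bern_poly n x" for n x
  have "f n x = 0"
  proof (rule derivative_chain_vanishes[where f = f and c = "\<lambda>n. of_nat (Suc n)"])
    fix n t
    show "(f (Suc n) has_field_derivative of_nat (Suc n) * f n t) (at t)"
      unfolding f_def[abs_def]
      by (rule derivative_eq_intros bern_poly_has_field_derivative
          DERIV_chain2[OF bern_poly_has_field_derivative] refl | simp)+
         (simp add: algebra_simps)
  next
    fix n
    show "f (Suc (Suc n)) 1 = f (Suc (Suc n)) 0"
      by (simp add: f_def bern_poly_at_1)
  qed (simp_all add: f_def del: of_nat_Suc)
  then have "(-1) ^ n * ((-1) ^ n * bern_poly n (1 - x)) = (-1) ^ n * bern_poly n x"
    by (simp add: f_def)
  moreover have "(-1 :: complex) ^ n * (-1) ^ n = 1"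
    by (simp flip: power_mult_distrib)
  ultimately show ?thesis
    by (metis mult.assoc mult_1)
qed

lemma continuous_on_gbinomial [continuous_intros]:
  fixes f :: "complex \<Rightarrow> complex"
  assumes "continuous_on S f"
  shows "continuous_on S (\<lambda>z. f z gchoose k)"
  unfolding gbinomial_prod_rev by (intro continuous_intros assms) auto

lemma Suc_times_gbinomial_Suc:
  "of_nat (Suc k) * (a gchoose Suc k) = (a - of_nat k) * (a gchoose k)"
  for a :: "'a :: field_char_0"
  by (simp only: gbinomial_absorption gbinomial_absorb_comp)

lemma Suc_times_gbinomial_add:
  "of_nat (Suc k) * ((a + of_nat (Suc k)) gchoose Suc k) = (a + 1) * ((a + 1 + of_nat k) gchoose k)"
  for a :: "'a :: field_char_0"
  unfolding Suc_times_gbinomial_Suc by (simp add: add_ac)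

lemma Suc_times_gbinomial_add_complement:
  fixes a :: "'a :: field_char_0"
  assumes "k \<le> n"
  shows "of_nat (Suc k) * ((a + of_nat (Suc k)) gchoose Suc k)
      + of_nat (Suc n - k) * ((a + of_nat k) gchoose k)
      = (a + of_nat n + 2) * ((a + of_nat k) gchoose k)"
proof -
  have "a + of_nat (Suc k) = (a + of_nat k) + 1"
    by simp
  then have absorb: "of_nat (Suc k) * ((a + of_nat (Suc k)) gchoose Suc k)
      = (a + of_nat k + 1) * ((a + of_nat k) gchoose k)"
    by (simp only: Suc_times_gbinomial)
  have diff: "of_nat (Suc n - k) = of_nat n + 1 - (of_nat k :: 'a)"
    using assms by (simp add: Suc_diff_le of_nat_diff)
  show ?thesis
    unfolding absorb diff by (simp add: algebra_simps)
qed

lemma Suc_times_gbinomial_alternating: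
  fixes a :: "'a :: field_char_0"
  assumes "k \<le> m"
  shows "of_nat (Suc k) * ((a gchoose Suc k) * (-1) ^ (m - k))
      + of_nat (Suc m - k) * ((a gchoose k) * (-1) ^ (Suc m - k))
      = (a - of_nat m - 1) * ((a gchoose k) * (-1) ^ (m - k))"
proof -
  have sign: "(-1 :: 'a) ^ (Suc m - k) = - ((-1) ^ (m - k))"
    using assms by (simp add: Suc_diff_le)
  have diff: "of_nat (Suc m - k) = of_nat m + 1 - (of_nat k :: 'a)"
    using assms by (simp add: Suc_diff_le of_nat_diff)
  show ?thesis
    unfolding mult.assoc[symmetric] Suc_times_gbinomial_Suc sign diff by (simp add: algebra_simps)
qed

(* A factor that does not depend on s is covered by taking mu or nu to be 0. *)
lemma convolution_has_field_derivative:
  fixes P Q :: "nat \<Rightarrow> complex \<Rightarrow> complex" and c d :: "nat \<Rightarrow> complex"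
  assumes P: "\<And>k. (P k has_field_derivative \<mu> * of_nat k * P (k - 1) s) (at s)"
    and Q: "\<And>k. (Q k has_field_derivative \<nu> * of_nat k * Q (k - 1) s) (at s)"
    and coeff: "\<And>k. k \<le> n \<Longrightarrow>
      \<mu> * of_nat (Suc k) * c (Suc k) + \<nu> * of_nat (Suc n - k) * c k = \<gamma> * d k"
  shows "((\<lambda>s. \<Sum>k\<le>Suc n. c k * P k s * Q (Suc n - k) s) has_field_derivative
           \<gamma> * (\<Sum>k\<le>n. d k * P k s * Q (n - k) s)) (at s)"
proof -
  have deriv: "((\<lambda>s. \<Sum>k\<le>Suc n. c k * P k s * Q (Suc n - k) s) has_field_derivative
      (\<Sum>k\<le>Suc n. \<mu> * of_nat k * c k * P (k - 1) s * Q (Suc n - k) s)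
      + (\<Sum>k\<le>Suc n. \<nu> * of_nat (Suc n - k) * c k * P k s * Q (n - k) s)) (at s)"
    by (rule DERIV_cong, rule DERIV_sum, rule DERIV_mult[OF DERIV_cmult[OF P] Q])
       (simp add: sum.distrib[symmetric] algebra_simps)
  have "(\<Sum>k\<le>Suc n. \<mu> * of_nat k * c k * P (k - 1) s * Q (Suc n - k) s)
      = (\<Sum>k\<le>n. \<mu> * of_nat (Suc k) * c (Suc k) * P k s * Q (n - k) s)"
    by (subst sum.atMost_Suc_shift) simp
  moreover have "(\<Sum>k\<le>Suc n. \<nu> * of_nat (Suc n - k) * c k * P k s * Q (n - k) s)
      = (\<Sum>k\<le>n. \<nu> * of_nat (Suc n - k) * c k * P k s * Q (n - k) s)"
    by simp
  moreover have "(\<Sum>k\<le>n. \<mu> * of_nat (Suc k) * c (Suc k) * P k s * Q (n - k) s)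
      + (\<Sum>k\<le>n. \<nu> * of_nat (Suc n - k) * c k * P k s * Q (n - k) s)
      = \<gamma> * (\<Sum>k\<le>n. d k * P k s * Q (n - k) s)"
    unfolding sum.distrib[symmetric] sum_distrib_left
  proof (rule sum.cong)
    fix k assume "k \<in> {..n}"
    then have "\<mu> * of_nat (Suc k) * c (Suc k) + \<nu> * of_nat (Suc n - k) * c k = \<gamma> * d k"
      by (intro coeff) simp
    then show "\<mu> * of_nat (Suc k) * c (Suc k) * P k s * Q (n - k) s
        + \<nu> * of_nat (Suc n - k) * c k * P k s * Q (n - k) s
        = \<gamma> * (d k * P k s * Q (n - k) s)"
      by (metis distrib_right mult.assoc)
  qed simp
  ultimately show ?thesis
    using deriv by simp
qed

lemma vanishing_by_differentiation:
  fixes D :: "nat \<Rightarrow> complex \<Rightarrow> complex \<Rightarrow> complex \<Rightarrow> complex"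
    and a b :: "nat \<Rightarrow> complex \<Rightarrow> complex"
  assumes base: "\<And>\<alpha> x y. D 0 \<alpha> x y = 0"
    and dx: "\<And>n \<alpha> x y. ((\<lambda>s. D (Suc n) \<alpha> s y) has_field_derivative a n \<alpha> * D n (\<alpha> + 1) x y) (at x)"
    and dt: "\<And>n \<alpha> t. ((\<lambda>s. D (Suc n) \<alpha> s s) has_field_derivative b n \<alpha> * D n \<alpha> t t) (at t)"
    and ends: "\<And>n \<alpha>. D (Suc (Suc n)) \<alpha> 1 1 = D (Suc (Suc n)) \<alpha> 0 0"
    and cont: "\<And>n x y. continuous_on UNIV (\<lambda>\<alpha>. D n \<alpha> x y)"
    and poles: "\<And>n. finite {\<alpha>. b n \<alpha> = 0}"
  shows "D n \<alpha> x y = 0"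
proof -
  have diagonal: "D n \<alpha> t t = 0" for n \<alpha> t
  proof (rule continuous_vanishing_off_finite[of "\<lambda>\<alpha>. D n \<alpha> t t" "\<Union>k\<le>n. {\<alpha>. b k \<alpha> = 0}"])
    fix \<alpha> assume "\<alpha> \<notin> (\<Union>k\<le>n. {\<alpha>. b k \<alpha> = 0})"
    then have nonzero: "\<And>k. 0 < k \<Longrightarrow> k \<le> n \<Longrightarrow> b k \<alpha> \<noteq> 0"
      by blast
    show "D n \<alpha> t t = 0"
      by (rule derivative_chain_vanishes[where f = "\<lambda>m t. D m \<alpha> t t" and c = "\<lambda>m. b m \<alpha>"])
         (use nonzero in \<open>simp_all add: base dt ends\<close>)
  qed (simp_all add: cont poles)
  show ?thesis
  proof (induction n arbitrary: \<alpha> x)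
    case 0
    show ?case by (rule base)
  next
    case (Suc n)
    have "D (Suc n) \<alpha> x y = D (Suc n) \<alpha> y y"
    proof (rule has_field_derivative_zero_imp_eq[where f = "\<lambda>x. D (Suc n) \<alpha> x y"])
      fix t
      show "((\<lambda>x. D (Suc n) \<alpha> x y) has_field_derivative 0) (at t)"
        using dx[where n = n and \<alpha> = \<alpha> and x = t and y = y] by (simp add: Suc.IH)
    qed
    also have "\<dots> = 0"
      by (rule diagonal)
    finally show ?case .
  qed
qed

definition bern_defect :: "nat \<Rightarrow> complex \<Rightarrow> complex \<Rightarrow> complex \<Rightarrow> complex" where
  "bern_defect n \<alpha> x y =
     (\<alpha> + of_nat n + 2) * (\<Sum>k\<le>n. ((\<alpha> + of_nat k) gchoose k) * bern_poly k x * bern_poly (n - k) y)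
     - (\<alpha> + 1) * (\<Sum>k\<le>n. ((\<alpha> + of_nat n + 2) gchoose k) * (-1) ^ (n - k)
                            * bern_poly k x * bern_poly (n - k) (x - y))
     - (\<Sum>k\<le>n. ((\<alpha> + of_nat n + 2) gchoose k) * ((\<alpha> + of_nat (n - k)) gchoose (n - k))
                 * bern_poly k y * bern_poly (n - k) (x - y))"

lemma bern_defect_dx:
  "((\<lambda>x. bern_defect (Suc n) \<alpha> x y) has_field_derivative (\<alpha> + 1) * bern_defect n (\<alpha> + 1) x y)
     (at x)"
proof -
  define N where "N = \<alpha> + of_nat (Suc n) + 2"
  have N: "N = (\<alpha> + 1) + of_nat n + 2"
    by (simp add: N_def)
  have L: "((\<lambda>x. \<Sum>k\<le>Suc n. ((\<alpha> + of_nat k) gchoose k) * bern_poly k x * bern_poly (Suc n - k) y)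
      has_field_derivative
        (\<alpha> + 1) * (\<Sum>k\<le>n. ((\<alpha> + 1 + of_nat k) gchoose k) * bern_poly k x * bern_poly (n - k) y))
      (at x)"
    by (rule convolution_has_field_derivative[where \<mu> = 1 and \<nu> = 0 and Q = "\<lambda>k s. bern_poly k y"])
       (use bern_poly_has_field_derivative in
         \<open>simp_all add: Suc_times_gbinomial_add del: of_nat_Suc\<close>)
  have U: "((\<lambda>x. \<Sum>k\<le>Suc n. ((N gchoose k) * (-1) ^ (Suc n - k))
                                 * bern_poly k x * bern_poly (Suc n - k) (x - y))
      has_field_derivative
        (\<alpha> + 2) * (\<Sum>k\<le>n. ((N gchoose k) * (-1) ^ (n - k)) * bern_poly k x * bern_poly (n - k) (x - y)))
      (at x)"
    by (rule convolution_has_field_derivative[where \<mu> = 1 and \<nu> = 1 and Q = "\<lambda>k s. bern_poly k (s - y)"])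
       (use bern_poly_has_field_derivative bern_poly_shift_has_field_derivative
          Suc_times_gbinomial_alternating[where m = n and a = N] in \<open>simp_all add: N_def\<close>)
  have V: "((\<lambda>x. \<Sum>k\<le>Suc n. ((N gchoose k) * ((\<alpha> + of_nat (Suc n - k)) gchoose (Suc n - k)))
                                 * bern_poly k y * bern_poly (Suc n - k) (x - y))
      has_field_derivative
        (\<alpha> + 1) * (\<Sum>k\<le>n. ((N gchoose k) * ((\<alpha> + 1 + of_nat (n - k)) gchoose (n - k)))
                              * bern_poly k y * bern_poly (n - k) (x - y)))
      (at x)"
    by (rule convolution_has_field_derivative
          [where \<mu> = 0 and \<nu> = 1 and P = "\<lambda>k s. bern_poly k y" and Q = "\<lambda>k s. bern_poly k (s - y)"])
       (use bern_poly_shift_has_field_derivative in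
         \<open>simp_all add: Suc_diff_le Suc_times_gbinomial_add del: of_nat_Suc\<close>)
  show ?thesis
    unfolding bern_defect_def N_def[symmetric] N[symmetric]
    by (rule DERIV_cong[OF DERIV_diff[OF DERIV_diff[OF DERIV_cmult[OF L] DERIV_cmult[OF U]] V]])
       (simp add: N_def algebra_simps)
qed

lemma bern_defect_diagonal:
  "bern_defect n \<alpha> t t =
     (\<alpha> + of_nat n + 2) * (\<Sum>k\<le>n. ((\<alpha> + of_nat k) gchoose k) * bern_poly k t * bern_poly (n - k) t)
     - (\<alpha> + 1) * (\<Sum>k\<le>n. ((\<alpha> + of_nat n + 2) gchoose k) * (-1) ^ (n - k)
                            * bern_poly k t * bern_poly (n - k) 0)
     - (\<Sum>k\<le>n. ((\<alpha> + of_nat n + 2) gchoose k) * ((\<alpha> + of_nat (n - k)) gchoose (n - k))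
                 * bern_poly k t * bern_poly (n - k) 0)"
  by (simp add: bern_defect_def)

lemma bern_defect_dt:
  "((\<lambda>t. bern_defect (Suc n) \<alpha> t t) has_field_derivative (\<alpha> + of_nat n + 3) * bern_defect n \<alpha> t t)
     (at t)"
proof -
  define N where "N = \<alpha> + of_nat (Suc n) + 2"
  have N: "N - 1 = \<alpha> + of_nat n + 2"
    by (simp add: N_def)
  have L: "((\<lambda>t. \<Sum>k\<le>Suc n. ((\<alpha> + of_nat k) gchoose k) * bern_poly k t * bern_poly (Suc n - k) t)
      has_field_derivative
        (\<alpha> + of_nat n + 2) * (\<Sum>k\<le>n. ((\<alpha> + of_nat k) gchoose k) * bern_poly k t * bern_poly (n - k) t))
      (at t)"
    by (rule convolution_has_field_derivative[where \<mu> = 1 and \<nu> = 1])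
       (use bern_poly_has_field_derivative Suc_times_gbinomial_add_complement[where a = \<alpha> and n = n]
         in \<open>simp_all del: of_nat_Suc\<close>)
  have U: "((\<lambda>t. \<Sum>k\<le>Suc n. ((N gchoose k) * (-1) ^ (Suc n - k)) * bern_poly k t * bern_poly (Suc n - k) 0)
      has_field_derivative
        N * (\<Sum>k\<le>n. (((\<alpha> + of_nat n + 2) gchoose k) * (-1) ^ (n - k))
                      * bern_poly k t * bern_poly (n - k) 0))
      (at t)"
    by (rule convolution_has_field_derivative[where \<mu> = 1 and \<nu> = 0 and Q = "\<lambda>k s. bern_poly k 0"])
       (use bern_poly_has_field_derivative in
         \<open>simp_all add: mult.assoc[symmetric] gbinomial_absorption N del: of_nat_Suc\<close>)
  have V: "((\<lambda>t. \<Sum>k\<le>Suc n. ((N gchoose k) * ((\<alpha> + of_nat (Suc n - k)) gchoose (Suc n - k)))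
                                 * bern_poly k t * bern_poly (Suc n - k) 0)
      has_field_derivative
        N * (\<Sum>k\<le>n. (((\<alpha> + of_nat n + 2) gchoose k) * ((\<alpha> + of_nat (n - k)) gchoose (n - k)))
                      * bern_poly k t * bern_poly (n - k) 0))
      (at t)"
    by (rule convolution_has_field_derivative[where \<mu> = 1 and \<nu> = 0 and Q = "\<lambda>k s. bern_poly k 0"])
       (use bern_poly_has_field_derivative in
         \<open>simp_all add: mult.assoc[symmetric] gbinomial_absorption N del: of_nat_Suc\<close>)
  show ?thesis
    unfolding bern_defect_diagonal N_def[symmetric]
    by (rule DERIV_cong[OF DERIV_diff[OF DERIV_diff[OF DERIV_cmult[OF L] DERIV_cmult[OF U]] V]])
       (simp add: N_def algebra_simps)
qed

lemma bern_defect_ends: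
  assumes m: "m \<ge> 2"
  shows "bern_defect m \<alpha> 1 1 = bern_defect m \<alpha> 0 0"
proof -
  define b where "b k = bern_poly k 0" for k
  define N where "N = \<alpha> + of_nat m + 2"
  define C where "C k = (\<alpha> + of_nat k) gchoose k" for k
  have at_1: "bern_poly k 1 = b k + (if k = 1 then 1 else 0)" for k
    by (simp add: b_def bern_poly_at_1)
  have "(\<Sum>k\<le>m. C k * bern_poly k 1 * bern_poly (m - k) 1)
      = (\<Sum>k\<le>m. C k * b k * b (m - k) + (if k = 1 then C k * b (m - k) else 0)
          + (if k = m - 1 then C k * b k else 0) + (if k = 1 \<and> m = 2 then C k else 0))"
    by (rule sum.cong) (use m in \<open>auto simp: at_1 algebra_simps\<close>)
  then have L: "(\<Sum>k\<le>m. C k * bern_poly k 1 * bern_poly (m - k) 1)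
      = (\<Sum>k\<le>m. C k * b k * b (m - k)) + (\<alpha> + 1) * b (m - 1) + C (m - 1) * b (m - 1)
        + (\<alpha> + 1) * (if m = 2 then 1 else 0)"
    using m by (simp add: sum.distrib C_def)
  have "(\<Sum>k\<le>m. (N gchoose k) * (-1) ^ (m - k) * bern_poly k 1 * b (m - k))
      = (\<Sum>k\<le>m. (N gchoose k) * (-1) ^ (m - k) * b k * b (m - k)
          + (if k = 1 then N * (-1) ^ (m - 1) * b (m - 1) else 0))"
    by (rule sum.cong) (auto simp: at_1 algebra_simps)
  then have U: "(\<Sum>k\<le>m. (N gchoose k) * (-1) ^ (m - k) * bern_poly k 1 * b (m - k))
      = (\<Sum>k\<le>m. (N gchoose k) * (-1) ^ (m - k) * b k * b (m - k)) + N * ((-1) ^ (m - 1) * b (m - 1))"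
    using m by (simp add: sum.distrib)
  have "(\<Sum>k\<le>m. (N gchoose k) * C (m - k) * bern_poly k 1 * b (m - k))
      = (\<Sum>k\<le>m. (N gchoose k) * C (m - k) * b k * b (m - k)
          + (if k = 1 then N * C (m - 1) * b (m - 1) else 0))"
    by (rule sum.cong) (auto simp: at_1 algebra_simps)
  then have V: "(\<Sum>k\<le>m. (N gchoose k) * C (m - k) * bern_poly k 1 * b (m - k))
      = (\<Sum>k\<le>m. (N gchoose k) * C (m - k) * b k * b (m - k)) + N * C (m - 1) * b (m - 1)"
    using m by (simp add: sum.distrib)
  have reflect: "(-1) ^ (m - 1) * b (m - 1) = b (m - 1) + (if m = 2 then 1 else 0)"
    using bern_poly_reflect[of "m - 1" 0] at_1[of "m - 1"] m by (auto simp: b_def)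
  have "bern_defect m \<alpha> 1 1 - bern_defect m \<alpha> 0 0
      = N * (\<alpha> + 1) * (b (m - 1) + (if m = 2 then 1 else 0) - (-1) ^ (m - 1) * b (m - 1))"
    unfolding bern_defect_diagonal N_def[symmetric] C_def[symmetric] b_def[symmetric] L U V
    by (simp add: algebra_simps)
  with reflect show ?thesis
    by simp
qed

lemma bern_defect_eq_0: "bern_defect n \<alpha> x y = 0"
proof (rule vanishing_by_differentiation[where D = bern_defect and a = "\<lambda>n \<alpha>. \<alpha> + 1"
      and b = "\<lambda>n \<alpha>. \<alpha> + of_nat n + 3"])
  show "bern_defect 0 \<alpha> x y = 0" for \<alpha> x y
    by (simp add: bern_defect_def)
  show "continuous_on UNIV (\<lambda>\<alpha>. bern_defect n \<alpha> x y)" for n x y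
    unfolding bern_defect_def by (intro continuous_intros)
  show "finite {\<alpha> :: complex. \<alpha> + of_nat n + 3 = 0}" for n
    by (simp add: add.assoc add_eq_0_iff2)
qed (simp_all only: bern_defect_dx bern_defect_dt bern_defect_ends)

(* The first identity at n + 1, as left side minus right side: the shift gives both defects
   the same derivative formulas. *)
definition euler_defect :: "nat \<Rightarrow> complex \<Rightarrow> complex \<Rightarrow> complex \<Rightarrow> complex" where
  "euler_defect n \<alpha> x y =
     (\<alpha> + of_nat n + 2) / 2 * (\<Sum>k\<le>n. ((\<alpha> + of_nat k) gchoose k) * euler_poly k x * euler_poly (n - k) y)
     - (\<Sum>k\<le>Suc n. ((\<alpha> + of_nat n + 2) gchoose k) * (-1) ^ (Suc n - k)
                     * bern_poly k x * euler_poly (Suc n - k) (x - y))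
     + (\<Sum>k\<le>Suc n. ((\<alpha> + of_nat n + 2) gchoose k) * ((\<alpha> + of_nat (Suc n - k)) gchoose (Suc n - k))
                     * bern_poly k y * euler_poly (Suc n - k) (x - y))"

lemma euler_defect_dx:
  "((\<lambda>x. euler_defect (Suc n) \<alpha> x y) has_field_derivative (\<alpha> + 1) * euler_defect n (\<alpha> + 1) x y)
     (at x)"
proof -
  define N where "N = \<alpha> + of_nat (Suc n) + 2"
  have N: "N = (\<alpha> + 1) + of_nat n + 2"
    by (simp add: N_def)
  have L: "((\<lambda>x. \<Sum>k\<le>Suc n. ((\<alpha> + of_nat k) gchoose k) * euler_poly k x * euler_poly (Suc n - k) y)
      has_field_derivative
        (\<alpha> + 1) * (\<Sum>k\<le>n. ((\<alpha> + 1 + of_nat k) gchoose k) * euler_poly k x * euler_poly (n - k) y))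
      (at x)"
    by (rule convolution_has_field_derivative[where \<mu> = 1 and \<nu> = 0 and Q = "\<lambda>k s. euler_poly k y"])
       (use euler_poly_has_field_derivative in
         \<open>simp_all add: Suc_times_gbinomial_add del: of_nat_Suc\<close>)
  have U: "((\<lambda>x. \<Sum>k\<le>Suc (Suc n). ((N gchoose k) * (-1) ^ (Suc (Suc n) - k))
                                       * bern_poly k x * euler_poly (Suc (Suc n) - k) (x - y))
      has_field_derivative
        (\<alpha> + 1) * (\<Sum>k\<le>Suc n. ((N gchoose k) * (-1) ^ (Suc n - k))
                                  * bern_poly k x * euler_poly (Suc n - k) (x - y)))
      (at x)"
    by (rule convolution_has_field_derivative[where \<mu> = 1 and \<nu> = 1 and Q = "\<lambda>k s. euler_poly k (s - y)"])
       (use bern_poly_has_field_derivative euler_poly_shift_has_field_derivative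
          Suc_times_gbinomial_alternating[where m = "Suc n" and a = N] in \<open>simp_all add: N_def\<close>)
  have V: "((\<lambda>x. \<Sum>k\<le>Suc (Suc n).
                   ((N gchoose k) * ((\<alpha> + of_nat (Suc (Suc n) - k)) gchoose (Suc (Suc n) - k)))
                   * bern_poly k y * euler_poly (Suc (Suc n) - k) (x - y))
      has_field_derivative
        (\<alpha> + 1) * (\<Sum>k\<le>Suc n. ((N gchoose k) * ((\<alpha> + 1 + of_nat (Suc n - k)) gchoose (Suc n - k)))
                                  * bern_poly k y * euler_poly (Suc n - k) (x - y)))
      (at x)"
    by (rule convolution_has_field_derivative
          [where \<mu> = 0 and \<nu> = 1 and P = "\<lambda>k s. bern_poly k y" and Q = "\<lambda>k s. euler_poly k (s - y)"])
       (use euler_poly_shift_has_field_derivative in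
         \<open>simp_all add: Suc_diff_le Suc_times_gbinomial_add del: of_nat_Suc\<close>)
  show ?thesis
    unfolding euler_defect_def N_def[symmetric] N[symmetric]
    by (rule DERIV_cong[OF DERIV_add[OF DERIV_diff[OF DERIV_cmult[OF L] U] V]])
       (simp add: N_def field_simps)
qed

lemma euler_defect_diagonal:
  "euler_defect n \<alpha> t t =
     (\<alpha> + of_nat n + 2) / 2 * (\<Sum>k\<le>n. ((\<alpha> + of_nat k) gchoose k) * euler_poly k t * euler_poly (n - k) t)
     - (\<Sum>k\<le>Suc n. ((\<alpha> + of_nat n + 2) gchoose k) * (-1) ^ (Suc n - k)
                     * bern_poly k t * euler_poly (Suc n - k) 0)
     + (\<Sum>k\<le>Suc n. ((\<alpha> + of_nat n + 2) gchoose k) * ((\<alpha> + of_nat (Suc n - k)) gchoose (Suc n - k))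
                     * bern_poly k t * euler_poly (Suc n - k) 0)"
  by (simp add: euler_defect_def)

lemma euler_defect_dt:
  "((\<lambda>t. euler_defect (Suc n) \<alpha> t t) has_field_derivative (\<alpha> + of_nat n + 3) * euler_defect n \<alpha> t t)
     (at t)"
proof -
  define N where "N = \<alpha> + of_nat (Suc n) + 2"
  have N: "N - 1 = \<alpha> + of_nat n + 2"
    by (simp add: N_def)
  have L: "((\<lambda>t. \<Sum>k\<le>Suc n. ((\<alpha> + of_nat k) gchoose k) * euler_poly k t * euler_poly (Suc n - k) t)
      has_field_derivative
        (\<alpha> + of_nat n + 2) * (\<Sum>k\<le>n. ((\<alpha> + of_nat k) gchoose k) * euler_poly k t * euler_poly (n - k) t))
      (at t)"
    by (rule convolution_has_field_derivative[where \<mu> = 1 and \<nu> = 1])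
       (use euler_poly_has_field_derivative Suc_times_gbinomial_add_complement[where a = \<alpha> and n = n]
         in \<open>simp_all del: of_nat_Suc\<close>)
  have U: "((\<lambda>t. \<Sum>k\<le>Suc (Suc n). ((N gchoose k) * (-1) ^ (Suc (Suc n) - k))
                                       * bern_poly k t * euler_poly (Suc (Suc n) - k) 0)
      has_field_derivative
        N * (\<Sum>k\<le>Suc n. (((\<alpha> + of_nat n + 2) gchoose k) * (-1) ^ (Suc n - k))
                          * bern_poly k t * euler_poly (Suc n - k) 0))
      (at t)"
    by (rule convolution_has_field_derivative[where \<mu> = 1 and \<nu> = 0 and Q = "\<lambda>k s. euler_poly k 0"])
       (use bern_poly_has_field_derivative in
         \<open>simp_all add: mult.assoc[symmetric] gbinomial_absorption N del: of_nat_Suc\<close>)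
  have V: "((\<lambda>t. \<Sum>k\<le>Suc (Suc n).
                   ((N gchoose k) * ((\<alpha> + of_nat (Suc (Suc n) - k)) gchoose (Suc (Suc n) - k)))
                   * bern_poly k t * euler_poly (Suc (Suc n) - k) 0)
      has_field_derivative
        N * (\<Sum>k\<le>Suc n. (((\<alpha> + of_nat n + 2) gchoose k) * ((\<alpha> + of_nat (Suc n - k)) gchoose (Suc n - k)))
                          * bern_poly k t * euler_poly (Suc n - k) 0))
      (at t)"
    by (rule convolution_has_field_derivative[where \<mu> = 1 and \<nu> = 0 and Q = "\<lambda>k s. euler_poly k 0"])
       (use bern_poly_has_field_derivative in
         \<open>simp_all add: mult.assoc[symmetric] gbinomial_absorption N del: of_nat_Suc\<close>)
  show ?thesis
    unfolding euler_defect_diagonal N_def[symmetric]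
    by (rule DERIV_cong[OF DERIV_add[OF DERIV_diff[OF DERIV_cmult[OF L] U] V]])
       (simp add: N_def field_simps)
qed

lemma euler_defect_ends:
  assumes m: "m \<ge> 1"
  shows "euler_defect m \<alpha> 1 1 = euler_defect m \<alpha> 0 0"
proof -
  define e where "e k = euler_poly k 0" for k
  define N where "N = \<alpha> + of_nat m + 2"
  define C where "C k = (\<alpha> + of_nat k) gchoose k" for k
  have at_1: "euler_poly k 1 = (if k = 0 then 2 else 0) - e k" for k
    by (cases "k = 0") (simp_all add: e_def euler_poly_at_1)
  have "(\<Sum>k\<le>m. C k * euler_poly k 1 * euler_poly (m - k) 1)
      = (\<Sum>k\<le>m. C k * e k * e (m - k) - (if k = 0 then 2 * e m else 0)
          - (if k = m then 2 * C m * e m else 0))"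
    by (rule sum.cong) (use m in \<open>auto simp: at_1 e_def C_def algebra_simps\<close>)
  then have L: "(\<Sum>k\<le>m. C k * euler_poly k 1 * euler_poly (m - k) 1)
      = (\<Sum>k\<le>m. C k * e k * e (m - k)) - 2 * e m - 2 * C m * e m"
    by (simp add: sum_subtractf)
  have "(\<Sum>k\<le>Suc m. (N gchoose k) * (-1) ^ (Suc m - k) * bern_poly k 1 * e (Suc m - k))
      = (\<Sum>k\<le>Suc m. (N gchoose k) * (-1) ^ (Suc m - k) * bern_poly k 0 * e (Suc m - k)
          + (if k = 1 then N * ((-1) ^ m * e m) else 0))"
    by (rule sum.cong) (auto simp: bern_poly_at_1 algebra_simps)
  then have U: "(\<Sum>k\<le>Suc m. (N gchoose k) * (-1) ^ (Suc m - k) * bern_poly k 1 * e (Suc m - k))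
      = (\<Sum>k\<le>Suc m. (N gchoose k) * (-1) ^ (Suc m - k) * bern_poly k 0 * e (Suc m - k))
        + N * ((-1) ^ m * e m)"
    by (simp add: sum.distrib)
  have "(\<Sum>k\<le>Suc m. (N gchoose k) * C (Suc m - k) * bern_poly k 1 * e (Suc m - k))
      = (\<Sum>k\<le>Suc m. (N gchoose k) * C (Suc m - k) * bern_poly k 0 * e (Suc m - k)
          + (if k = 1 then N * C m * e m else 0))"
    by (rule sum.cong) (auto simp: bern_poly_at_1 algebra_simps)
  then have V: "(\<Sum>k\<le>Suc m. (N gchoose k) * C (Suc m - k) * bern_poly k 1 * e (Suc m - k))
      = (\<Sum>k\<le>Suc m. (N gchoose k) * C (Suc m - k) * bern_poly k 0 * e (Suc m - k)) + N * C m * e m"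
    by (simp add: sum.distrib)
  have parity: "(-1) ^ m * e m = - e m"
    using m euler_poly_at_0_even[of m] by (cases "even m") (simp_all add: e_def)
  have "euler_defect m \<alpha> 1 1 - euler_defect m \<alpha> 0 0 = - N * (e m + (-1) ^ m * e m)"
    unfolding euler_defect_diagonal N_def[symmetric] C_def[symmetric] e_def[symmetric] L U V
    by (simp add: field_simps)
  with parity show ?thesis
    by simp
qed

lemma euler_defect_eq_0: "euler_defect n \<alpha> x y = 0"
proof (rule vanishing_by_differentiation[where D = euler_defect and a = "\<lambda>n \<alpha>. \<alpha> + 1"
      and b = "\<lambda>n \<alpha>. \<alpha> + of_nat n + 3"])
  show "euler_defect 0 \<alpha> x y = 0" for \<alpha> x y
    by (simp add: euler_defect_def bern_poly_Suc_0 euler_poly_Suc_0 field_simps)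
  show "continuous_on UNIV (\<lambda>\<alpha>. euler_defect n \<alpha> x y)" for n x y
    unfolding euler_defect_def by (intro continuous_intros) simp
  show "finite {\<alpha> :: complex. \<alpha> + of_nat n + 3 = 0}" for n
    by (simp add: add.assoc add_eq_0_iff2)
qed (simp_all only: euler_defect_dx euler_defect_dt euler_defect_ends)

theorem corollary1p1:
  fixes n :: nat and \<alpha> x y :: complex
  assumes "n > 0"
  shows "((\<alpha> + of_nat n + 1) / 2 *
           (\<Sum>k=0..n-1. ((\<alpha> + of_nat k) gchoose k) * euler_poly k x * euler_poly (n - 1 - k) y)
         = (\<Sum>k=0..n. ((\<alpha> + of_nat n + 1) gchoose k) *
              ((-1) ^ (n - k) * bern_poly k x - ((\<alpha> + of_nat (n - k)) gchoose (n - k)) * bern_poly k y)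
              * euler_poly (n - k) (x - y))) \<and>
         ((\<alpha> + of_nat n + 2) *
           (\<Sum>k=0..n. ((\<alpha> + of_nat k) gchoose k) * bern_poly k x * bern_poly (n - k) y)
         = (\<alpha> + 1) * (\<Sum>k=0..n. ((\<alpha> + of_nat n + 2) gchoose k) * (-1) ^ (n - k)
                                * bern_poly k x * bern_poly (n - k) (x - y))
           + (\<Sum>k=0..n. ((\<alpha> + of_nat n + 2) gchoose k) * ((\<alpha> + of_nat (n - k)) gchoose (n - k))
                                * bern_poly k y * bern_poly (n - k) (x - y)))"
proof -
  obtain m where n: "n = Suc m"
    using assms by (cases n) auto
  have lhs: "(\<alpha> + of_nat n + 1) / 2 *
      (\<Sum>k=0..n-1. ((\<alpha> + of_nat k) gchoose k) * euler_poly k x * euler_poly (n - 1 - k) y)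
    = (\<alpha> + of_nat m + 2) / 2 *
      (\<Sum>k\<le>m. ((\<alpha> + of_nat k) gchoose k) * euler_poly k x * euler_poly (m - k) y)"
    using n by (simp add: atLeast0AtMost add.assoc)
  have rhs: "(\<Sum>k=0..n. ((\<alpha> + of_nat n + 1) gchoose k) *
      ((-1) ^ (n - k) * bern_poly k x - ((\<alpha> + of_nat (n - k)) gchoose (n - k)) * bern_poly k y)
      * euler_poly (n - k) (x - y))
    = (\<Sum>k\<le>Suc m. ((\<alpha> + of_nat m + 2) gchoose k) * (-1) ^ (Suc m - k)
                   * bern_poly k x * euler_poly (Suc m - k) (x - y))
      - (\<Sum>k\<le>Suc m. ((\<alpha> + of_nat m + 2) gchoose k) * ((\<alpha> + of_nat (Suc m - k)) gchoose (Suc m - k))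
                     * bern_poly k y * euler_poly (Suc m - k) (x - y))"
    unfolding n atLeast0AtMost sum_subtractf[symmetric]
    by (rule sum.cong) (simp_all add: algebra_simps)
  show ?thesis
    using euler_defect_eq_0[of m \<alpha> x y] bern_defect_eq_0[of n \<alpha> x y]
    unfolding lhs rhs unfolding euler_defect_def bern_defect_def atLeast0AtMost by algebra
qed

end
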